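(* Let $\Pi_n=\{\pi_1,\ldots,\pi_n\}$ be a finite set of policies of a discrete mean-field game (setting in the context) and suppose $J$ is $\mu$-diff-affine. Let $M\in\mathbb R^{n\times n}$ with $M_{ij}=J(\pi_i,\mu^{\pi_j})$ and consider the symmetric two-player normal-form game where player 1 has payoff matrix $M$ and player 2 has payoff matrix $M^\top$. If $\nu\in\Delta(\{1,\ldots,n\})$ is a symmetric Nash equilibrium of this game (i.e. $e_k^\top M\nu\le\nu^\top M\nu$ for all $k$), then, viewing $\nu$ as a distribution over $\Pi_n$, $\nu$ is a Nash equilibrium of the restricted mean-field game: $J(\pi_k,\mu(\nu))-J(\pi(\nu),\mu(\nu))\le0$ for all $k=1,\ldots,n$.
   Context: A discrete mean-field game consists of finite state set $\mathcal X$, finite action set $\mathcal A$, reward $r:\mathcal X\times\mathcal A\times\Delta(\mathcal X)\to\mathbb R$, transitions $p(x'\mid x,a)$ independent of the population distribution, initial distribution $\mu_0$. A policy is $\pi:\mathcal X\to\Delta(\mathcal A)$; $\mu^\pi$ is its state occupancy measure (discounted or finite-horizon); $J(\pi,\mu)=\sum_{x,a}\mu^\pi(x)\pi(x,a)r(x,a,\mu)$. For $\nu\in\Delta(\Pi_n)$, $\mu(\nu)=\sum_j\nu(\pi_j)\mu^{\pi_j}$ and $J(\pi(\nu),\mu)=\sum_i\nu(\pi_i)J(\pi_i,\mu)$, where $\pi(\nu)$ samples a policy from $\nu$ at the start and plays it. $J$ is $\mu$-diff-affine if for all policies $\pi,\pi'$ the map $\mu\mapsto J(\pi,\mu)-J(\pi',\mu)$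 is affine. *)

theory Defs
  imports "HOL-Analysis.Analysis"
begin

text \<open>Distributions over states are functions 'x => real; policies are functions
  'x => 'a => real (pi x a = probability of action a in state x);
  transitions p x a x' = p(x' | x, a); reward r x a mu.\<close>

definition is_dist :: "('b::finite \<Rightarrow> real) \<Rightarrow> bool" where
  "is_dist d \<longleftrightarrow> (\<forall>y. 0 \<le> d y) \<and> (\<Sum>y\<in>UNIV. d y) = 1"

definition is_policy :: "('x::finite \<Rightarrow> 'a::finite \<Rightarrow> real) \<Rightarrow> bool" where
  "is_policy \<pi> \<longleftrightarrow> (\<forall>x. is_dist (\<pi> x))"

definition is_transition :: "('x::finite \<Rightarrow> 'a::finite \<Rightarrow> 'x \<Rightarrow> real) \<Rightarrow> bool" where
  "is_transition p \<longleftrightarrow> (\<forall>x a. is_dist (p x a))"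

fun state_dist :: "('x::finite \<Rightarrow> 'a::finite \<Rightarrow> 'x \<Rightarrow> real) \<Rightarrow> ('x \<Rightarrow> real)
     \<Rightarrow> ('x \<Rightarrow> 'a \<Rightarrow> real) \<Rightarrow> nat \<Rightarrow> 'x \<Rightarrow> real" where
  "state_dist p \<mu>0 \<pi> 0 = \<mu>0"
| "state_dist p \<mu>0 \<pi> (Suc t) =
     (\<lambda>x'. \<Sum>x\<in>UNIV. \<Sum>a\<in>UNIV. state_dist p \<mu>0 \<pi> t x * \<pi> x a * p x a x')"

definition occ_disc :: "('x::finite \<Rightarrow> 'a::finite \<Rightarrow> 'x \<Rightarrow> real) \<Rightarrow> ('x \<Rightarrow> real)
     \<Rightarrow> real \<Rightarrow> ('x \<Rightarrow> 'a \<Rightarrow> real) \<Rightarrow> 'x \<Rightarrow> real" where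
  "occ_disc p \<mu>0 \<gamma> \<pi> x = (1 - \<gamma>) * (\<Sum>t. \<gamma> ^ t * state_dist p \<mu>0 \<pi> t x)"

definition occ_fh :: "('x::finite \<Rightarrow> 'a::finite \<Rightarrow> 'x \<Rightarrow> real) \<Rightarrow> ('x \<Rightarrow> real)
     \<Rightarrow> nat \<Rightarrow> ('x \<Rightarrow> 'a \<Rightarrow> real) \<Rightarrow> 'x \<Rightarrow> real" where
  "occ_fh p \<mu>0 T \<pi> x = (\<Sum>t<T. state_dist p \<mu>0 \<pi> t x) / real T"

definition Jval :: "(('x::finite \<Rightarrow> 'a::finite \<Rightarrow> real) \<Rightarrow> 'x \<Rightarrow> real)
     \<Rightarrow> ('x \<Rightarrow> 'a \<Rightarrow> ('x \<Rightarrow> real) \<Rightarrow> real)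
     \<Rightarrow> ('x \<Rightarrow> 'a \<Rightarrow> real) \<Rightarrow> ('x \<Rightarrow> real) \<Rightarrow> real" where
  "Jval occ r \<pi> \<mu> = (\<Sum>x\<in>UNIV. \<Sum>a\<in>UNIV. occ \<pi> x * \<pi> x a * r x a \<mu>)"

definition affine_on_simplex :: "(('x::finite \<Rightarrow> real) \<Rightarrow> real) \<Rightarrow> bool" where
  "affine_on_simplex f \<longleftrightarrow>
     (\<forall>\<mu>1 \<mu>2 t. is_dist \<mu>1 \<longrightarrow> is_dist \<mu>2 \<longrightarrow> 0 \<le> t \<longrightarrow> t \<le> 1 \<longrightarrow>
        f (\<lambda>x. t * \<mu>1 x + (1 - t) * \<mu>2 x) = t * f \<mu>1 + (1 - t) * f \<mu>2)"

definition mu_diff_affine :: "(('x::finite \<Rightarrow> 'a::finite \<Rightarrow> real) \<Rightarrow> ('x \<Rightarrow> real) \<Rightarrow> real) \<Rightarrow> bool" where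
  "mu_diff_affine J \<longleftrightarrow>
     (\<forall>\<pi> \<pi>'. is_policy \<pi> \<longrightarrow> is_policy \<pi>' \<longrightarrow> affine_on_simplex (\<lambda>\<mu>. J \<pi> \<mu> - J \<pi>' \<mu>))"

end

theory Submission
  imports Defs
begin

text \<open>Occupancy measures are distributions, and on distributions each difference
  \<open>J(\<pi>\<^sub>k, \<cdot>) - J(\<pi>\<^sub>i, \<cdot>)\<close> is affine, so it commutes with finite mixtures. Hence the gain of
  deviating to \<open>\<pi>\<^sub>k\<close> against the mixed population \<open>\<mu>(\<nu>)\<close> is the \<open>\<nu>\<close>-average of the gains
  against the pure populations \<open>\<mu>\<^sup>\<pi>\<^sup>j\<close>, and averaging over \<open>i\<close> as well turns it into
  \<open>e\<^sub>k\<^sup>T M \<nu> - \<nu>\<^sup>T M \<nu>\<close>, which is nonpositive at a symmetric Nash equilibrium.\<close>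

lemma is_dist_le_one:
  assumes "is_dist d"
  shows "d x \<le> 1"
proof -
  have "d x \<le> (\<Sum>y\<in>UNIV. d y)"
    using assms unfolding is_dist_def by (intro member_le_sum) auto
  then show ?thesis
    using assms unfolding is_dist_def by simp
qed

lemma is_dist_state_dist:
  assumes p: "is_transition p" and "is_dist \<mu>0" and \<pi>: "is_policy \<pi>"
  shows "is_dist (state_dist p \<mu>0 \<pi> t)"
proof (induction t)
  case 0
  then show ?case using assms by simp
next
  case (Suc t)
  let ?d = "state_dist p \<mu>0 \<pi> t"
  have nonneg: "0 \<le> state_dist p \<mu>0 \<pi> (Suc t) y" for y
    using Suc p \<pi> unfolding is_dist_def is_policy_def is_transition_def
    by (auto intro!: sum_nonneg)
  have "(\<Sum>y\<in>UNIV. state_dist p \<mu>0 \<pi> (Suc t) y)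
      = (\<Sum>y\<in>UNIV. \<Sum>x\<in>UNIV. \<Sum>a\<in>UNIV. ?d x * \<pi> x a * p x a y)"
    by simp
  also have "\<dots> = (\<Sum>x\<in>UNIV. \<Sum>y\<in>UNIV. \<Sum>a\<in>UNIV. ?d x * \<pi> x a * p x a y)"
    by (rule sum.swap)
  also have "\<dots> = (\<Sum>x\<in>UNIV. \<Sum>a\<in>UNIV. \<Sum>y\<in>UNIV. ?d x * \<pi> x a * p x a y)"
    by (rule sum.cong[OF refl], rule sum.swap)
  also have "\<dots> = (\<Sum>x\<in>UNIV. ?d x * (\<Sum>a\<in>UNIV. \<pi> x a))"
    using p unfolding is_transition_def is_dist_def
    by (simp add: sum_distrib_left[symmetric])
  also have "\<dots> = 1"
    using \<pi> Suc unfolding is_policy_def is_dist_def by simp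
  finally show ?case
    using nonneg unfolding is_dist_def by blast
qed

lemma is_dist_occ_disc:
  assumes "is_transition p" "is_dist \<mu>0" "is_policy \<pi>" and \<gamma>: "0 \<le> \<gamma>" "\<gamma> < 1"
  shows "is_dist (occ_disc p \<mu>0 \<gamma> \<pi>)"
proof -
  have dist: "is_dist (state_dist p \<mu>0 \<pi> t)" for t
    using is_dist_state_dist assms(1-3) by blast
  have summable: "summable (\<lambda>t. \<gamma> ^ t * state_dist p \<mu>0 \<pi> t x)" for x
  proof (rule summable_comparison_test'[OF summable_geometric])
    show "norm (\<gamma> ^ t * state_dist p \<mu>0 \<pi> t x) \<le> \<gamma> ^ t" for t
      using dist[of t] is_dist_le_one[OF dist[of t]] \<gamma> unfolding is_dist_def
      by (simp add: abs_mult mult_left_le)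
  qed (use \<gamma> in simp)
  have nonneg: "0 \<le> occ_disc p \<mu>0 \<gamma> \<pi> x" for x
    unfolding occ_disc_def using \<gamma> dist unfolding is_dist_def
    by (intro mult_nonneg_nonneg suminf_nonneg summable) auto
  have "(\<Sum>x\<in>UNIV. \<Sum>t. \<gamma> ^ t * state_dist p \<mu>0 \<pi> t x)
      = (\<Sum>t. \<Sum>x\<in>UNIV. \<gamma> ^ t * state_dist p \<mu>0 \<pi> t x)"
    using summable by (subst suminf_sum) auto
  also have "\<dots> = (\<Sum>t. \<gamma> ^ t)"
    using dist unfolding is_dist_def by (simp add: sum_distrib_left[symmetric])
  also have "\<dots> = 1 / (1 - \<gamma>)"
    using \<gamma> by (simp add: suminf_geometric)
  finally have "(\<Sum>x\<in>UNIV. occ_disc p \<mu>0 \<gamma> \<pi> x) = 1"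
    using \<gamma> by (simp add: occ_disc_def sum_distrib_left[symmetric])
  then show ?thesis
    using nonneg unfolding is_dist_def by blast
qed

lemma is_dist_occ_fh:
  assumes "is_transition p" "is_dist \<mu>0" "is_policy \<pi>" and "T > 0"
  shows "is_dist (occ_fh p \<mu>0 T \<pi>)"
proof -
  have dist: "is_dist (state_dist p \<mu>0 \<pi> t)" for t
    using is_dist_state_dist assms(1-3) by blast
  have nonneg: "0 \<le> occ_fh p \<mu>0 T \<pi> x" for x
    unfolding occ_fh_def using dist unfolding is_dist_def
    by (intro divide_nonneg_nonneg sum_nonneg) auto
  have "(\<Sum>x\<in>UNIV. occ_fh p \<mu>0 T \<pi> x) = (\<Sum>t<T. \<Sum>x\<in>UNIV. state_dist p \<mu>0 \<pi> t x) / real T"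
    unfolding occ_fh_def by (simp add: sum_divide_distrib[symmetric] sum.swap[of _ UNIV])
  also have "\<dots> = 1"
    using dist \<open>T > 0\<close> unfolding is_dist_def by simp
  finally show ?thesis
    using nonneg unfolding is_dist_def by blast
qed

lemma is_dist_convex_combination:
  assumes "\<forall>j<n. 0 \<le> w j" "(\<Sum>j<n. w j) = 1" "\<forall>j<n. is_dist (m j)"
  shows "is_dist (\<lambda>x. \<Sum>j<n. w j * m j x)"
proof -
  have "(\<Sum>x\<in>UNIV. \<Sum>j<n. w j * m j x) = (\<Sum>j<n. w j * (\<Sum>x\<in>UNIV. m j x))"
    by (simp add: sum.swap[of _ UNIV] sum_distrib_left)
  also have "\<dots> = 1"
    using assms unfolding is_dist_def by simp
  finally show ?thesis
    using assms unfolding is_dist_def by (auto intro!: sum_nonneg)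
qed

lemma affine_on_simplex_convex_combination:
  fixes w :: "nat \<Rightarrow> real"
  assumes f: "affine_on_simplex f"
    and "\<forall>j<n. 0 \<le> w j" "(\<Sum>j<n. w j) = 1" "\<forall>j<n. is_dist (m j)"
  shows "f (\<lambda>x. \<Sum>j<n. w j * m j x) = (\<Sum>j<n. w j * f (m j))"
  using assms(2-)
proof (induction n arbitrary: w)
  case 0
  then show ?case by simp
next
  case (Suc n)
  show ?case
  proof (cases "w n = 1")
    case True
    then have "\<forall>j\<in>{..<n}. w j = 0"
      using Suc.prems by (subst sum_nonneg_eq_0_iff[symmetric]) auto
    then show ?thesis
      using True by simp
  next
    case False
    \<comment> \<open>Split off the last point: \<open>w = t \<cdot> w' + (1 - t) \<cdot> e\<^sub>n\<close> with \<open>w'\<close> a distribution on \<open>{..<n}\<close>.\<close>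
    define t where "t = 1 - w n"
    define w' where "w' j = w j / t" for j
    have "w n \<le> 1"
      using Suc.prems(1,2) sum_nonneg[of "{..<n}" w] by simp
    with False have t: "0 < t" "t \<le> 1"
      using Suc.prems(1) unfolding t_def by auto
    have w'_dist: "\<forall>j<n. 0 \<le> w' j" "(\<Sum>j<n. w' j) = 1"
      using Suc.prems(1,2) t unfolding w'_def t_def by (simp_all add: sum_divide_distrib[symmetric])
    have scale: "t * (\<Sum>j<n. w' j * g j) = (\<Sum>j<n. w j * g j)" for g :: "nat \<Rightarrow> real"
      using t unfolding w'_def by (simp add: sum_distrib_left)
    have last: "1 - t = w n"
      unfolding t_def by simp
    have "f (\<lambda>x. \<Sum>j<Suc n. w j * m j x)
        = f (\<lambda>x. t * (\<Sum>j<n. w' j * m j x) + (1 - t) * m n x)"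
      by (simp add: scale last)
    also have "\<dots> = t * f (\<lambda>x. \<Sum>j<n. w' j * m j x) + (1 - t) * f (m n)"
    proof -
      have "is_dist (\<lambda>x. \<Sum>j<n. w' j * m j x)" "is_dist (m n)"
        using is_dist_convex_combination[OF w'_dist, of m] Suc.prems(3) by auto
      then show ?thesis
        using f t unfolding affine_on_simplex_def by simp
    qed
    also have "\<dots> = t * (\<Sum>j<n. w' j * f (m j)) + (1 - t) * f (m n)"
      using Suc.IH[OF w'_dist] Suc.prems(3) by simp
    also have "\<dots> = (\<Sum>j<Suc n. w j * f (m j))"
      by (simp add: scale last)
    finally show ?thesis .
  qed
qed

lemma deviation_gain_eq_matrix_gain:
  fixes J :: "nat \<Rightarrow> 'm \<Rightarrow> real" and \<nu> :: "nat \<Rightarrow> real"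
  assumes mix: "\<And>i. i < n \<Longrightarrow> J k \<mu> - J i \<mu> = (\<Sum>j<n. \<nu> j * (J k (\<mu>s j) - J i (\<mu>s j)))"
    and sum_one: "(\<Sum>i<n. \<nu> i) = 1"
  shows "J k \<mu> - (\<Sum>i<n. \<nu> i * J i \<mu>)
       = (\<Sum>j<n. J k (\<mu>s j) * \<nu> j) - (\<Sum>i<n. \<Sum>j<n. \<nu> i * J i (\<mu>s j) * \<nu> j)"
proof -
  have "J k \<mu> - (\<Sum>i<n. \<nu> i * J i \<mu>) = (\<Sum>i<n. \<nu> i * (J k \<mu> - J i \<mu>))"
    using sum_one by (simp add: right_diff_distrib sum_subtractf sum_distrib_right[symmetric])
  also have "\<dots> = (\<Sum>i<n. \<nu> i * (\<Sum>j<n. \<nu> j * (J k (\<mu>s j) - J i (\<mu>s j))))"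
    using mix by simp
  also have "\<dots> = (\<Sum>i<n. \<Sum>j<n. \<nu> i * (\<nu> j * J k (\<mu>s j)))
                 - (\<Sum>i<n. \<Sum>j<n. \<nu> i * J i (\<mu>s j) * \<nu> j)"
    by (simp add: sum_distrib_left right_diff_distrib sum_subtractf mult_ac)
  also have "(\<Sum>i<n. \<Sum>j<n. \<nu> i * (\<nu> j * J k (\<mu>s j))) = (\<Sum>i<n. \<nu> i) * (\<Sum>j<n. J k (\<mu>s j) * \<nu> j)"
    by (simp add: sum_product mult_ac)
  finally show ?thesis
    using sum_one by simp
qed

theorem mainTheorem8:
  fixes p :: "'x::finite \<Rightarrow> 'a::finite \<Rightarrow> 'x \<Rightarrow> real"
    and \<mu>0 :: "'x \<Rightarrow> real"
    and r :: "'x \<Rightarrow> 'a \<Rightarrow> ('x \<Rightarrow> real) \<Rightarrow> real"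
    and occ :: "('x \<Rightarrow> 'a \<Rightarrow> real) \<Rightarrow> 'x \<Rightarrow> real"
    and pols :: "nat \<Rightarrow> ('x \<Rightarrow> 'a \<Rightarrow> real)"
    and n :: nat
    and \<nu> :: "nat \<Rightarrow> real"
  assumes trans: "is_transition p"
    and init: "is_dist \<mu>0"
    and occ_def: "(\<exists>\<gamma>. 0 \<le> \<gamma> \<and> \<gamma> < 1 \<and> occ = occ_disc p \<mu>0 \<gamma>) \<or> (\<exists>T>0. occ = occ_fh p \<mu>0 T)"
    and pols: "\<forall>i<n. is_policy (pols i)"
    and diff_aff: "mu_diff_affine (Jval occ r)"
    and nu_nonneg: "\<forall>i<n. 0 \<le> \<nu> i"
    and nu_sum: "(\<Sum>i<n. \<nu> i) = 1"
    and sym_ne: "\<forall>k<n. (\<Sum>j<n. Jval occ r (pols k) (occ (pols j)) * \<nu> j)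
                     \<le> (\<Sum>i<n. \<Sum>j<n. \<nu> i * Jval occ r (pols i) (occ (pols j)) * \<nu> j)"
  shows "\<forall>k<n.
           Jval occ r (pols k) (\<lambda>x. \<Sum>j<n. \<nu> j * occ (pols j) x)
           - (\<Sum>i<n. \<nu> i * Jval occ r (pols i) (\<lambda>x. \<Sum>j<n. \<nu> j * occ (pols j) x)) \<le> 0"
proof (intro allI impI)
  fix k assume k: "k < n"
  let ?J = "\<lambda>i. Jval occ r (pols i)"
  have occ_dists: "\<forall>j<n. is_dist (occ (pols j))"
    using occ_def pols is_dist_occ_disc[OF trans init] is_dist_occ_fh[OF trans init] by auto
  have "?J k (\<lambda>x. \<Sum>j<n. \<nu> j * occ (pols j) x) - ?J i (\<lambda>x. \<Sum>j<n. \<nu> j * occ (pols j) x)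
      = (\<Sum>j<n. \<nu> j * (?J k (occ (pols j)) - ?J i (occ (pols j))))" if "i < n" for i
  proof -
    have "affine_on_simplex (\<lambda>\<mu>. ?J k \<mu> - ?J i \<mu>)"
      using diff_aff pols k \<open>i < n\<close> unfolding mu_diff_affine_def by blast
    from affine_on_simplex_convex_combination[OF this nu_nonneg nu_sum occ_dists]
    show ?thesis by simp
  qed
  then have "?J k (\<lambda>x. \<Sum>j<n. \<nu> j * occ (pols j) x)
      - (\<Sum>i<n. \<nu> i * ?J i (\<lambda>x. \<Sum>j<n. \<nu> j * occ (pols j) x))
    = (\<Sum>j<n. ?J k (occ (pols j)) * \<nu> j) - (\<Sum>i<n. \<Sum>j<n. \<nu> i * ?J i (occ (pols j)) * \<nu> j)"
    by (rule deviation_gain_eq_matrix_gain[where J = ?J and \<mu>s = "\<lambda>j. occ (pols j)", OF _ nu_sum])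
  with sym_ne k show "?J k (\<lambda>x. \<Sum>j<n. \<nu> j * occ (pols j) x)
      - (\<Sum>i<n. \<nu> i * ?J i (\<lambda>x. \<Sum>j<n. \<nu> j * occ (pols j) x)) \<le> 0"
    by simp
qed

end
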